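(* Let $D$ be a rectangle whose upper and lower sides $P^1,P^2$ have length $a$ and whose left and right sides $Q^1,Q^2$ have length $b$. Then for every $k\in\mathbb{Z}_+$, $$\lambda_k^{Q^1Q^2}(D)\ \ge\ \frac{\pi^2}{b^2}\,M\!\left(\frac{b}{a}\,k\right),$$ where $M:[0,\infty)\to[0,\infty)$ is the inverse function of the strictly increasing continuous bijection $y\mapsto F(y)=\sum_{j=0}^{\infty}(y-j^2)_+^{1/2}$, $y\ge 0$, and $z_+=\max\{z,0\}$.
   Context: $\lambda_k^{Q^1Q^2}(D)$ denotes the $k$-th eigenvalue (with multiplicity, nondecreasing order) of $-\Delta$ on $D$ with Dirichlet condition on the left and right sides $Q^1,Q^2$ and Neumann condition on the upper and lower sides $P^1,P^2$. Its eigenvalues are $\pi^2(i^2/a^2+j^2/b^2)$, $i=1,2,\dots$, $j=0,1,2,\dots$. *)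

theory Defs
  imports Complex_Main
begin

text \<open>Mixed Dirichlet (left/right sides Q1,Q2, length b) / Neumann (upper/lower sides P1,P2,
  length a) eigenvalues of the rectangle: the multiset
  pi^2 (i^2/a^2 + j^2/b^2), i = 1,2,..., j = 0,1,2,...\<close>

definition rect_eig :: "real \<Rightarrow> real \<Rightarrow> nat \<times> nat \<Rightarrow> real" where
  "rect_eig a b ij = pi\<^sup>2 * (real (fst ij)^2 / a^2 + real (snd ij)^2 / b^2)"

definition rect_count :: "real \<Rightarrow> real \<Rightarrow> real \<Rightarrow> nat" where
  "rect_count a b t = card {ij :: nat \<times> nat. 1 \<le> fst ij \<and> rect_eig a b ij \<le> t}"

text \<open>k-th eigenvalue (k \<ge> 1), counted with multiplicity, nondecreasing order.\<close>
definition lambdaQQ :: "real \<Rightarrow> real \<Rightarrow> nat \<Rightarrow> real" where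
  "lambdaQQ a b k = Inf {t. k \<le> rect_count a b t}"

definition posp :: "real \<Rightarrow> real" where
  "posp z = max z 0"

definition Ffun :: "real \<Rightarrow> real" where
  "Ffun y = (\<Sum>j. sqrt (posp (y - real j ^ 2)))"

definition Mfun :: "real \<Rightarrow> real" where
  "Mfun z = (THE y. 0 \<le> y \<and> Ffun y = z)"

end

theory Submission
  imports Defs
begin

text \<open>Count the eigenvalues \<open>\<le> t\<close> column by column: with \<open>y = t b\<^sup>2 / \<pi>\<^sup>2\<close>, the indices
  \<open>i \<ge> 1\<close> admissible for a fixed \<open>j\<close> are those with \<open>i \<le> (a/b) sqrt ((y - j\<^sup>2)\<^sub>+)\<close>, so at
  most \<open>(a/b) F(y)\<close> eigenvalues lie below \<open>t\<close>. Hence if \<open>k\<close> of them do, then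
  \<open>F(y) \<ge> (b/a) k\<close>, and as \<open>F\<close> is strictly increasing this means \<open>y \<ge> M((b/a) k)\<close>.\<close>

lemma posp_nonneg [simp]: "0 \<le> posp x"
  by (simp add: posp_def)

lemma ex_less_nat_square: "\<exists>N::nat. y < real N ^ 2"
proof -
  obtain n :: nat where "y < real n" using reals_Archimedean2 by blast
  moreover have "n \<le> Suc n ^ 2" by (simp add: power2_eq_square)
  then have "real n \<le> real (Suc n) ^ 2" by (metis of_nat_le_iff of_nat_power)
  ultimately show ?thesis by (intro exI[of _ "Suc n"]) linarith
qed

lemma Ffun_eq_sum:
  assumes "y \<le> real N ^ 2"
  shows "Ffun y = (\<Sum>j<N. sqrt (posp (y - real j ^ 2)))"
  unfolding Ffun_def
proof (rule suminf_finite)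
  fix n assume "n \<notin> {..<N}"
  then have "real N ^ 2 \<le> real n ^ 2" by (intro power_mono) auto
  with assms have "y - real n ^ 2 \<le> 0" by linarith
  then show "sqrt (posp (y - real n ^ 2)) = 0" by (simp add: posp_def)
qed simp

lemma Ffun_zero: "Ffun 0 = 0"
  using Ffun_eq_sum[of 0 0] by simp

lemma Ffun_less:
  assumes "y < y'" and "0 < y'"
  shows "Ffun y < Ffun y'"
proof -
  obtain N where N: "y' < real N ^ 2" using ex_less_nat_square by blast
  with assms have "0 < N" by (cases N) auto
  have "(\<Sum>j<N. sqrt (posp (y - real j ^ 2))) < (\<Sum>j<N. sqrt (posp (y' - real j ^ 2)))"
  proof (rule sum_strict_mono_ex1)
    show "\<forall>j\<in>{..<N}. sqrt (posp (y - real j ^ 2)) \<le> sqrt (posp (y' - real j ^ 2))"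
      using assms unfolding posp_def by (auto intro!: real_sqrt_le_mono max.mono)
    show "\<exists>j\<in>{..<N}. sqrt (posp (y - real j ^ 2)) < sqrt (posp (y' - real j ^ 2))"
      using assms \<open>0 < N\<close> by (intro bexI[of _ 0]) (auto simp: posp_def)
  qed simp
  with N assms show ?thesis by (simp add: Ffun_eq_sum[of _ N])
qed

lemma inj_on_Ffun: "inj_on Ffun {0..}"
  by (rule strict_mono_on_imp_inj_on) (auto simp: strict_mono_on_def intro: Ffun_less)

lemma isCont_Ffun: "isCont Ffun y"
proof -
  obtain N where N: "y < real N ^ 2" using ex_less_nat_square by blast
  have "continuous_on {..<real N ^ 2} Ffun"
  proof (rule continuous_on_cong[THEN iffD2, OF refl])
    show "Ffun x = (\<Sum>j<N. sqrt (posp (x - real j ^ 2)))" if "x \<in> {..<real N ^ 2}" for x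
      using that by (intro Ffun_eq_sum) simp
    show "continuous_on {..<real N ^ 2} (\<lambda>y. \<Sum>j<N. sqrt (posp (y - real j ^ 2)))"
      unfolding posp_def by (intro continuous_intros continuous_on_max)
  qed
  with N show ?thesis by (simp add: continuous_on_eq_continuous_at)
qed

lemma sqrt_le_Ffun:
  assumes "0 \<le> y"
  shows "sqrt y \<le> Ffun y"
proof -
  obtain N where N: "y < real N ^ 2" using ex_less_nat_square by blast
  with assms have "0 < N" by (cases N) auto
  have "sqrt (posp (y - real 0 ^ 2)) \<le> (\<Sum>j<N. sqrt (posp (y - real j ^ 2)))"
    using \<open>0 < N\<close> by (intro member_le_sum) (auto simp: posp_def)
  with assms N show ?thesis by (simp add: Ffun_eq_sum[of _ N] posp_def)
qed

lemma Ffun_surj: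
  assumes "0 \<le> z"
  obtains y where "0 \<le> y" and "Ffun y = z"
proof -
  have "z \<le> Ffun (z\<^sup>2)" using sqrt_le_Ffun[of "z\<^sup>2"] assms by simp
  moreover have "continuous_on {0..z\<^sup>2} Ffun"
    by (intro continuous_at_imp_continuous_on ballI isCont_Ffun)
  ultimately show ?thesis
    using IVT'[of Ffun 0 z "z\<^sup>2"] Ffun_zero assms that by auto
qed

lemma Mfun_Ffun:
  assumes "0 \<le> y"
  shows "Mfun (Ffun y) = y"
  unfolding Mfun_def
  using assms inj_on_Ffun by (intro the_equality) (auto dest: inj_onD)

lemma Mfun_le:
  assumes "0 < z" and "z \<le> Ffun y"
  shows "Mfun z \<le> y"
proof -
  have "0 \<le> z" using assms(1) by simp
  then obtain y0 where "0 \<le> y0" and Fy0: "Ffun y0 = z" by (rule Ffun_surj)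
  with assms(1) Ffun_zero have "0 < y0" by (cases "y0 = 0") auto
  then have "y0 \<le> y" using Ffun_less[of y y0] assms(2) Fy0 by (cases "y < y0") auto
  with \<open>0 \<le> y0\<close> Fy0 show ?thesis by (auto simp: Mfun_Ffun)
qed

lemma card_lattice_points_le:
  fixes c :: "nat \<Rightarrow> real" and N :: nat
  assumes "\<And>j. 0 \<le> c j"
  defines "P \<equiv> {(i, j). 1 \<le> i \<and> j < N \<and> real i \<le> c j}"
  shows "finite P" and "real (card P) \<le> (\<Sum>j<N. c j)"
proof -
  define Q where "Q = (\<Union>j<N. {1..nat \<lfloor>c j\<rfloor>} \<times> {j})"
  have "P \<subseteq> Q" unfolding P_def Q_def by (auto intro: le_nat_floor)
  moreover have "finite Q" unfolding Q_def by auto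
  ultimately show "finite P" by (rule finite_subset)
  have "card Q \<le> (\<Sum>j<N. nat \<lfloor>c j\<rfloor>)"
    unfolding Q_def using card_UN_le[of "{..<N}" "\<lambda>j. {1..nat \<lfloor>c j\<rfloor>} \<times> {j}"] by simp
  moreover have "card P \<le> card Q" using \<open>P \<subseteq> Q\<close> \<open>finite Q\<close> by (rule card_mono[rotated])
  ultimately have "real (card P) \<le> (\<Sum>j<N. real (nat \<lfloor>c j\<rfloor>))"
    by (metis of_nat_le_iff of_nat_sum order_trans)
  also have "\<dots> \<le> (\<Sum>j<N. c j)"
    using assms by (intro sum_mono) (simp add: of_nat_int_floor)
  finally show "real (card P) \<le> (\<Sum>j<N. c j)" .
qed

lemma rect_eig_leD:
  assumes "0 < a" and "0 < b" and "rect_eig a b (i, j) \<le> t"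
  defines "y \<equiv> t * b\<^sup>2 / pi\<^sup>2"
  shows "real j ^ 2 \<le> y" and "real i \<le> a / b * sqrt (posp (y - real j ^ 2))"
proof -
  have "(b / a)\<^sup>2 * real i ^ 2 + real j ^ 2 \<le> y"
    using assms by (simp add: rect_eig_def field_simps power_divide)
  then have i2: "real i ^ 2 \<le> (a / b)\<^sup>2 * (y - real j ^ 2)"
    using assms(1,2) by (simp add: field_simps power_divide)
  have "0 \<le> (a / b)\<^sup>2 * (y - real j ^ 2)" using i2 by (rule order_trans[rotated]) simp
  then show "real j ^ 2 \<le> y"
    using assms(1,2) by (simp add: zero_le_mult_iff)
  have "real i \<le> sqrt ((a / b)\<^sup>2 * (y - real j ^ 2))"
    using i2 real_le_rsqrt by blast
  with \<open>real j ^ 2 \<le> y\<close> assms(1,2) show "real i \<le> a / b * sqrt (posp (y - real j ^ 2))"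
    by (simp add: real_sqrt_mult posp_def)
qed

lemma rect_sublevel_subset:
  assumes "0 < a" and "0 < b" and "t * b\<^sup>2 / pi\<^sup>2 < real N ^ 2"
  shows "{ij. 1 \<le> fst ij \<and> rect_eig a b ij \<le> t}
    \<subseteq> {(i, j). 1 \<le> i \<and> j < N \<and> real i \<le> a / b * sqrt (posp (t * b\<^sup>2 / pi\<^sup>2 - real j ^ 2))}"
proof clarify
  fix i j assume "1 \<le> fst (i, j)" and le: "rect_eig a b (i, j) \<le> t"
  have "real j ^ 2 < real N ^ 2" using rect_eig_leD(1)[OF assms(1,2) le] assms(3) by linarith
  then have "real j < real N" by (rule power_less_imp_less_base) simp
  then have "j < N" by simp
  with \<open>1 \<le> fst (i, j)\<close> rect_eig_leD(2)[OF assms(1,2) le]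
  show "1 \<le> i \<and> j < N \<and> real i \<le> a / b * sqrt (posp (t * b\<^sup>2 / pi\<^sup>2 - real j ^ 2))"
    by simp
qed

lemma finite_rect_sublevel:
  assumes "0 < a" and "0 < b"
  shows "finite {ij. 1 \<le> fst ij \<and> rect_eig a b ij \<le> t}"
proof -
  obtain N where "t * b\<^sup>2 / pi\<^sup>2 < real N ^ 2" using ex_less_nat_square by blast
  with assms show ?thesis
    by (rule finite_subset[OF rect_sublevel_subset card_lattice_points_le(1)])
      (simp add: assms less_imp_le)
qed

lemma rect_count_le:
  assumes "0 < a" and "0 < b"
  shows "real (rect_count a b t) \<le> a / b * Ffun (t * b\<^sup>2 / pi\<^sup>2)"
proof -
  define y where "y = t * b\<^sup>2 / pi\<^sup>2"
  obtain N where N: "y < real N ^ 2" using ex_less_nat_square by blast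
  have c_nonneg: "0 \<le> a / b * sqrt (posp (y - real j ^ 2))" for j
    using assms by simp
  have "rect_count a b t
      \<le> card {(i, j). 1 \<le> i \<and> j < N \<and> real i \<le> a / b * sqrt (posp (y - real j ^ 2))}"
    unfolding rect_count_def y_def
    using rect_sublevel_subset[OF assms] N card_lattice_points_le(1)[OF c_nonneg]
    by (intro card_mono) (auto simp: y_def)
  also note card_lattice_points_le(2)[OF c_nonneg]
  also have "(\<Sum>j<N. a / b * sqrt (posp (y - real j ^ 2))) = a / b * Ffun y"
    using N by (simp add: Ffun_eq_sum[of _ N] sum_distrib_left)
  finally show ?thesis by (simp add: y_def)
qed

lemma rect_count_ge:
  assumes "0 < a" and "0 < b"
  shows "k \<le> rect_count a b (pi\<^sup>2 * real k ^ 2 / a\<^sup>2)"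
proof -
  have "(\<lambda>i. (i, 0)) ` {1..k} \<subseteq> {ij. 1 \<le> fst ij \<and> rect_eig a b ij \<le> pi\<^sup>2 * real k ^ 2 / a\<^sup>2}"
    using assms by (auto simp: rect_eig_def divide_right_mono power_mono)
  then have "card ((\<lambda>i. (i, 0::nat)) ` {1..k}) \<le> rect_count a b (pi\<^sup>2 * real k ^ 2 / a\<^sup>2)"
    unfolding rect_count_def using finite_rect_sublevel[OF assms] by (rule card_mono[rotated])
  moreover have "card ((\<lambda>i. (i, 0::nat)) ` {1..k}) = k"
    by (subst card_image) (auto simp: inj_on_def)
  ultimately show ?thesis by simp
qed

lemma Mfun_le_of_rect_count:
  assumes "0 < a" and "0 < b" and "1 \<le> k" and "k \<le> rect_count a b t"
  shows "pi\<^sup>2 / b\<^sup>2 * Mfun (b / a * real k) \<le> t"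
proof -
  have "real k \<le> a / b * Ffun (t * b\<^sup>2 / pi\<^sup>2)"
    using assms(4) rect_count_le[OF assms(1,2), of t] by linarith
  then have "b / a * real k \<le> Ffun (t * b\<^sup>2 / pi\<^sup>2)"
    using assms(1,2) by (simp add: field_simps)
  then have "Mfun (b / a * real k) \<le> t * b\<^sup>2 / pi\<^sup>2"
    using assms(1-3) by (intro Mfun_le) auto
  then have "pi\<^sup>2 / b\<^sup>2 * Mfun (b / a * real k) \<le> pi\<^sup>2 / b\<^sup>2 * (t * b\<^sup>2 / pi\<^sup>2)"
    by (intro mult_left_mono) auto
  with assms(2) show ?thesis by simp
qed

theorem lemma3p2:
  fixes a b :: real and k :: nat
  assumes "0 < a" and "0 < b" and "1 \<le> k"
  shows "lambdaQQ a b k \<ge> pi\<^sup>2 / b\<^sup>2 * Mfun (b / a * real k)"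
  unfolding lambdaQQ_def
proof (rule cInf_greatest)
  show "{t. k \<le> rect_count a b t} \<noteq> {}"
    using rect_count_ge[OF assms(1,2)] by blast
qed (use assms Mfun_le_of_rect_count in auto)

end
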